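(* Let $\xi\in\mathbb{R}\setminus\mathbb{Q}$, let $n\ge1$ be an integer, and let $q$ be the denominator of a convergent of the continued fraction expansion of $\xi$. Put $c_5 = (n+1)2^{n+1}$. Then there exist an irreducible polynomial $P \in \mathbb{Z}[T]$ of degree $n$ and an irreducible monic polynomial $Q \in \mathbb{Z}[T]$ of degree $n+1$ such that \[ c_5 q^{2k-n} \le |P^{[k]}(\xi)| \le 3c_5 q^{2k-n} \quad\text{and}\quad c_5 q^{2k-n} \le |Q^{[k]}(\xi)| \le 3c_5 q^{2k-n} \qquad (0\le k\le n). \]
   Context: For $P \in \mathbb{R}[T]$ and $k\ge0$, $P^{[k]}(\xi) = P^{(k)}(\xi)/k!$ denotes the $k$-th divided derivative of $P$ at $\xi$ (the coefficient of $(T-\xi)^k$ in the Taylor expansion of $P$ at $\xi$). *)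

theory Defs
  imports "HOL-Analysis.Analysis" "HOL-Computational_Algebra.Polynomial"
begin

fun cf_rem :: "real \<Rightarrow> nat \<Rightarrow> real" where
  "cf_rem x 0 = x"
| "cf_rem x (Suc k) = 1 / (cf_rem x k - of_int \<lfloor>cf_rem x k\<rfloor>)"

definition cf_quot :: "real \<Rightarrow> nat \<Rightarrow> int" where
  "cf_quot x k = \<lfloor>cf_rem x k\<rfloor>"

fun cf_den :: "real \<Rightarrow> nat \<Rightarrow> int" where
  "cf_den x 0 = 1"
| "cf_den x (Suc 0) = cf_quot x 1"
| "cf_den x (Suc (Suc k)) = cf_quot x (Suc (Suc k)) * cf_den x (Suc k) + cf_den x k"

definition div_deriv :: "int poly \<Rightarrow> nat \<Rightarrow> real \<Rightarrow> real" where
  "div_deriv P k \<xi> = poly ((pderiv ^^ k) (map_poly real_of_int P)) \<xi> / fact k"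

end

theory Submission
  imports Defs
begin

text \<open>
  Let p'/q' and p/q be consecutive convergents.  Since q p' - p q' = \<plusminus>1, the
  polynomials B_i = (qT - p)^i (q'T - p')^(n-i), 0 \<le> i \<le> n, form a Z-basis of the integer
  polynomials of degree \<le> n, and |B_i^[k](\<xi>)| \<le> binom(n,k) q^(2k-n).  Writing the real target
  \<Sum> 2 c5 s_k q^(2k-n) (T - \<xi>)^k (signs s_k = \<plusminus>1) in this basis and moving each coordinate by
  at most 4 to an integer changes the k-th divided derivative by at most c5 q^(2k-n), which gives
  the bounds.  The freedom in the rounding is used for irreducibility: coordinates are chosen
  congruent modulo 4 to those of T^n + 2 (resp. 2), so that Eisenstein's criterion at 2 applies;
  primitivity of P comes from a counting argument over 2^n candidates (n \<ge> 2) or from a prime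
  constant coordinate (n = 1), while Q is monic.
\<close>

section \<open>Taylor coefficients of real polynomials\<close>

definition taylor_coeff :: "real poly \<Rightarrow> nat \<Rightarrow> real \<Rightarrow> real" where
  "taylor_coeff R k x = poly ((pderiv ^^ k) R) x / fact k"

lemma div_deriv_taylor_coeff: "div_deriv P k x = taylor_coeff (map_poly of_int P) k x"
  by (simp add: div_deriv_def taylor_coeff_def)

lemma taylor_coeff_add: "taylor_coeff (A + B) k x = taylor_coeff A k x + taylor_coeff B k x"
  by (simp add: taylor_coeff_def higher_pderiv_add add_divide_distrib)

lemma taylor_coeff_diff: "taylor_coeff (A - B) k x = taylor_coeff A k x - taylor_coeff B k x"
  using taylor_coeff_add[of "A - B" B k x] by simp

lemma taylor_coeff_smult: "taylor_coeff (smult c A) k x = c * taylor_coeff A k x"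
  by (simp add: taylor_coeff_def higher_pderiv_smult)

lemma taylor_coeff_sum: "taylor_coeff (\<Sum>i\<in>I. f i) k x = (\<Sum>i\<in>I. taylor_coeff (f i) k x)"
  by (simp add: taylor_coeff_def higher_pderiv_sum poly_sum sum_divide_distrib)

lemma degree_eq_if_taylor_coeff_nonzero:
  assumes "degree R \<le> n" and "taylor_coeff R n x \<noteq> 0"
  shows "degree R = n"
proof (rule ccontr)
  assume "degree R \<noteq> n"
  with assms(1) have "(pderiv ^^ n) R = 0"
    by (intro poly_eqI) (simp add: coeff_higher_pderiv coeff_eq_0)
  with assms(2) show False by (simp add: taylor_coeff_def)
qed

lemma higher_pderiv_mult_linear:
  fixes F L :: "real poly"
  assumes L: "pderiv L = [:c:]"
  shows "(pderiv ^^ Suc k) (F * L) =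
     (pderiv ^^ Suc k) F * L + smult (of_nat (Suc k) * c) ((pderiv ^^ k) F)"
proof (induction k)
  case 0
  show ?case by (simp add: pderiv_mult L algebra_simps)
next
  case (Suc k)
  have "(pderiv ^^ Suc (Suc k)) (F * L) = pderiv ((pderiv ^^ Suc k) (F * L))"
    by simp
  also have "\<dots> = pderiv ((pderiv ^^ Suc k) F * L) + smult (of_nat (Suc k) * c) ((pderiv ^^ Suc k) F)"
    by (simp only: Suc pderiv_add pderiv_smult) simp
  also have "pderiv ((pderiv ^^ Suc k) F * L) = (pderiv ^^ Suc k) F * [:c:] + L * pderiv ((pderiv ^^ Suc k) F)"
    by (simp only: pderiv_mult L)
  also have "(pderiv ^^ Suc k) F * [:c:] = smult c ((pderiv ^^ Suc k) F)"
    by (simp add: mult.commute)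
  also have "smult (of_nat (Suc (Suc k)) * c) ((pderiv ^^ Suc k) F) =
     smult (of_nat (Suc k) * c) ((pderiv ^^ Suc k) F) + smult c ((pderiv ^^ Suc k) F)"
    by (simp add: smult_add_left[symmetric] algebra_simps)
  ultimately show ?case by (simp add: algebra_simps)
qed

lemma taylor_coeff_mult_linear:
  "taylor_coeff (F * [:c0, c1:]) k x =
     taylor_coeff F k x * (c0 + c1 * x) + (if k = 0 then 0 else c1 * taylor_coeff F (k - 1) x)"
proof (cases k)
  case 0
  then show ?thesis by (simp add: taylor_coeff_def algebra_simps)
next
  case (Suc j)
  have "(pderiv ^^ Suc j) (F * [:c0, c1:]) =
      (pderiv ^^ Suc j) F * [:c0, c1:] + smult (of_nat (Suc j) * c1) ((pderiv ^^ j) F)"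
    by (rule higher_pderiv_mult_linear) (simp add: pderiv_pCons)
  then have "taylor_coeff (F * [:c0, c1:]) (Suc j) x = (poly ((pderiv ^^ Suc j) F) x * (c0 + c1 * x)
      + of_nat (Suc j) * c1 * poly ((pderiv ^^ j) F) x) / (of_nat (Suc j) * fact j)"
    by (simp add: taylor_coeff_def algebra_simps)
  also have "\<dots> = taylor_coeff F (Suc j) x * (c0 + c1 * x) + c1 * taylor_coeff F j x"
    by (simp add: taylor_coeff_def add_divide_distrib)
  finally show ?thesis using Suc by simp
qed

lemma taylor_coeff_linear_power: "taylor_coeff ([:-x, 1:] ^ j) k x = (if k = j then 1 else 0)"
proof (induction j arbitrary: k)
  case 0
  show ?case by (cases k) (simp_all add: taylor_coeff_def funpow_Suc_right del: funpow.simps)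
next
  case (Suc j)
  have "[:-x, 1:] ^ Suc j = [:-x, 1:] ^ j * [:-x, 1:]" by (simp add: mult.commute)
  then show ?case by (simp only: taylor_coeff_mult_linear Suc.IH) auto
qed

text \<open>F is binomially bounded
  at x (with parameters m, \<alpha>, \<beta>) if |F^[k](x)| \<le> binom(m,k) \<beta>^k \<alpha>^(m-k) for all k; this holds
  for a product of m linear factors L with |L(x)| \<le> \<alpha> and leading coefficient of size \<le> \<beta>,
  since each such factor raises m by one.\<close>
definition binomial_bounded :: "real poly \<Rightarrow> real \<Rightarrow> nat \<Rightarrow> real \<Rightarrow> real \<Rightarrow> bool" where
  "binomial_bounded F x m \<alpha> \<beta> \<longleftrightarrow>
     (\<forall>k. \<bar>taylor_coeff F k x\<bar> \<le> real (m choose k) * \<beta> ^ k * \<alpha> ^ (m - k))"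

lemma binomial_bounded_1: "binomial_bounded 1 x 0 \<alpha> \<beta>"
  unfolding binomial_bounded_def
proof
  fix k
  have "taylor_coeff 1 k x = (if k = 0 then 1 else 0)"
    using taylor_coeff_linear_power[of x 0 k] by simp
  then show "\<bar>taylor_coeff 1 k x\<bar> \<le> real (0 choose k) * \<beta> ^ k * \<alpha> ^ (0 - k)"
    by (cases k) simp_all
qed

lemma binomial_bounded_mult_linear:
  assumes F: "binomial_bounded F x m \<alpha> \<beta>"
    and L0: "\<bar>c0 + c1 * x\<bar> \<le> \<alpha>" and L1: "\<bar>c1\<bar> \<le> \<beta>" and "0 \<le> \<alpha>" "0 \<le> \<beta>"
  shows "binomial_bounded (F * [:c0, c1:]) x (Suc m) \<alpha> \<beta>"
  unfolding binomial_bounded_def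
proof
  fix k
  have Fk: "\<bar>taylor_coeff F k x\<bar> \<le> real (m choose k) * \<beta> ^ k * \<alpha> ^ (m - k)" for k
    using F by (simp add: binomial_bounded_def)
  show "\<bar>taylor_coeff (F * [:c0, c1:]) k x\<bar> \<le> real (Suc m choose k) * \<beta> ^ k * \<alpha> ^ (Suc m - k)"
  proof (cases k)
    case 0
    have "\<bar>taylor_coeff F 0 x * (c0 + c1 * x)\<bar> \<le> \<alpha> ^ m * \<alpha>"
      unfolding abs_mult using Fk[of 0] L0 \<open>0 \<le> \<alpha>\<close> by (intro mult_mono) auto
    then show ?thesis using 0 by (simp only: taylor_coeff_mult_linear) (simp add: mult.commute)
  next
    case (Suc j)
    text \<open>The term coming from F^[k], which vanishes when k > m.\<close>
    have top: "\<bar>taylor_coeff F k x * (c0 + c1 * x)\<bar> \<le> real (m choose k) * \<beta> ^ k * \<alpha> ^ (m - j)"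
    proof (cases "k \<le> m")
      case True
      then have "\<alpha> ^ (m - k) * \<alpha> = \<alpha> ^ (m - j)"
        using Suc by (metis Suc_diff_Suc Suc_le_lessD power_Suc2)
      moreover have "\<bar>taylor_coeff F k x * (c0 + c1 * x)\<bar> \<le> (real (m choose k) * \<beta> ^ k * \<alpha> ^ (m - k)) * \<alpha>"
        unfolding abs_mult using Fk[of k] L0 assms(4,5) by (intro mult_mono) auto
      ultimately show ?thesis by (simp add: mult.assoc)
    next
      case False
      then have "m choose k = 0" by simp
      then show ?thesis using Fk[of k] by (simp del: binomial_eq_0_iff)
    qed
    have low: "\<bar>c1 * taylor_coeff F j x\<bar> \<le> \<beta> * (real (m choose j) * \<beta> ^ j * \<alpha> ^ (m - j))"
      unfolding abs_mult using Fk[of j] L1 assms(5) by (intro mult_mono) auto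
    have "\<bar>taylor_coeff (F * [:c0, c1:]) k x\<bar>
        \<le> \<bar>taylor_coeff F k x * (c0 + c1 * x)\<bar> + \<bar>c1 * taylor_coeff F j x\<bar>"
      using Suc by (simp only: taylor_coeff_mult_linear) (simp add: abs_triangle_ineq)
    also have "\<dots> \<le> (real (m choose k) + real (m choose j)) * \<beta> ^ k * \<alpha> ^ (m - j)"
      using top low Suc by (simp add: algebra_simps)
    also have "\<dots> = real (Suc m choose k) * \<beta> ^ k * \<alpha> ^ (Suc m - k)"
      using Suc by simp
    finally show ?thesis .
  qed
qed

lemma binomial_bounded_mult_linear_power:
  assumes "binomial_bounded F x m \<alpha> \<beta>"
    and "\<bar>c0 + c1 * x\<bar> \<le> \<alpha>" "\<bar>c1\<bar> \<le> \<beta>" "0 \<le> \<alpha>" "0 \<le> \<beta>"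
  shows "binomial_bounded (F * [:c0, c1:] ^ j) x (m + j) \<alpha> \<beta>"
proof (induction j)
  case 0
  then show ?case using assms(1) by simp
next
  case (Suc j)
  have "F * [:c0, c1:] ^ Suc j = (F * [:c0, c1:] ^ j) * [:c0, c1:]"
    by (simp add: algebra_simps)
  then show ?case
    using binomial_bounded_mult_linear[OF Suc.IH assms(2-5)] by simp
qed


section \<open>Convergents of a continued fraction\<close>

text \<open>Numerators and denominators of the convergents, shifted by one index so that the
  recursion starts from p_(-1) = 1, q_(-1) = 0: conv_num x (Suc k) = p_k and
  conv_den x (Suc k) = q_k.\<close>
fun conv_num :: "real \<Rightarrow> nat \<Rightarrow> int" where
  "conv_num x 0 = 1"
| "conv_num x (Suc 0) = cf_quot x 0"
| "conv_num x (Suc (Suc k)) = cf_quot x (Suc k) * conv_num x (Suc k) + conv_num x k"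

fun conv_den :: "real \<Rightarrow> nat \<Rightarrow> int" where
  "conv_den x 0 = 0"
| "conv_den x (Suc 0) = 1"
| "conv_den x (Suc (Suc k)) = cf_quot x (Suc k) * conv_den x (Suc k) + conv_den x k"

lemma cf_den_eq_conv_den: "cf_den x m = conv_den x (Suc m)"
  by (induction x m rule: cf_den.induct) auto

lemma cf_rem_irrational: "x \<notin> \<rat> \<Longrightarrow> cf_rem x k \<notin> \<rat>"
proof (induction k)
  case (Suc k)
  let ?r = "cf_rem x k"
  show ?case
  proof
    assume "cf_rem x (Suc k) \<in> \<rat>"
    then have "inverse (cf_rem x (Suc k)) \<in> \<rat>" by (rule Rats_inverse)
    then have "frac ?r \<in> \<rat>" by (simp add: frac_def)
    then have "frac ?r + of_int \<lfloor>?r\<rfloor> \<in> \<rat>" by (intro Rats_add) auto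
    then show False using Suc by (simp add: frac_def)
  qed
qed simp

lemma cf_rem_gt_1: "x \<notin> \<rat> \<Longrightarrow> cf_rem x (Suc k) > 1"
proof -
  assume "x \<notin> \<rat>"
  then have "cf_rem x k \<notin> \<int>" using cf_rem_irrational Ints_subset_Rats by blast
  then have "frac (cf_rem x k) \<noteq> 0" by (simp add: frac_eq_0_iff)
  then have "0 < frac (cf_rem x k)" using frac_ge_0 by (simp add: less_le)
  then show ?thesis using frac_lt_1 by (simp add: frac_def)
qed

lemma cf_quot_ge_1: "x \<notin> \<rat> \<Longrightarrow> cf_quot x (Suc k) \<ge> 1"
  using cf_rem_gt_1[of x k] unfolding cf_quot_def by linarith

lemma conv_den_mono: "x \<notin> \<rat> \<Longrightarrow> 0 \<le> conv_den x k \<and> conv_den x k \<le> conv_den x (Suc k) \<and> 1 \<le> conv_den x (Suc k)"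
proof (induction k)
  case (Suc k)
  have "cf_quot x (Suc k) * conv_den x (Suc k) \<ge> 1 * conv_den x (Suc k)"
    using cf_quot_ge_1[OF Suc.prems] Suc by (intro mult_right_mono) auto
  then show ?case using Suc.IH[OF Suc.prems] by (simp only: conv_den.simps) linarith
qed simp

lemma cf_rem_moebius:
  assumes x: "x \<notin> \<rat>"
  shows "x * (of_int (conv_den x (Suc k)) * cf_rem x (Suc k) + of_int (conv_den x k)) =
         of_int (conv_num x (Suc k)) * cf_rem x (Suc k) + of_int (conv_num x k)"
proof (induction k)
  case 0
  have "0 < frac x" using x Ints_subset_Rats by (auto simp: less_le frac_eq_0_iff)
  then show ?case by (simp add: cf_quot_def frac_def field_simps)
next
  case (Suc k)
  define r where "r = cf_rem x (Suc k)"
  define r' where "r' = cf_rem x (Suc (Suc k))"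
  define a where "a = (of_int (cf_quot x (Suc k)) :: real)"
  have r': "r' > 1" unfolding r'_def using cf_rem_gt_1[OF x] .
  have r_eq: "r = a + 1 / r'"
    using r' by (simp add: r_def r'_def a_def cf_quot_def field_simps)
  have "x * (of_int (conv_den x (Suc (Suc k))) * r' + of_int (conv_den x (Suc k))) =
        r' * (x * (of_int (conv_den x (Suc k)) * r + of_int (conv_den x k)))"
    unfolding r_eq using r' by (simp add: a_def field_simps)
  also have "\<dots> = r' * (of_int (conv_num x (Suc k)) * r + of_int (conv_num x k))"
    using Suc by (simp add: r_def)
  also have "\<dots> = of_int (conv_num x (Suc (Suc k))) * r' + of_int (conv_num x (Suc k))"
    unfolding r_eq using r' by (simp add: a_def field_simps)
  finally show ?case unfolding r'_def .
qed

lemma conv_det: "conv_den x (Suc k) * conv_num x k - conv_num x (Suc k) * conv_den x k = (-1) ^ k"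
  by (induction k) (simp_all add: algebra_simps)

lemma convergent_approximation:
  fixes x :: real and m :: nat
  assumes x: "x \<notin> \<rat>"
  defines "q \<equiv> conv_den x (Suc m)" and "q' \<equiv> conv_den x m"
    and "p \<equiv> conv_num x (Suc m)" and "p' \<equiv> conv_num x m"
  shows "1 \<le> q" "0 \<le> q'" "q' \<le> q" "q * p' - p * q' = (-1) ^ m"
    "\<bar>of_int q * x - of_int p\<bar> \<le> 1 / of_int q" "\<bar>of_int q' * x - of_int p'\<bar> \<le> 1 / of_int q"
proof -
  show q: "1 \<le> q" "0 \<le> q'" "q' \<le> q" using conv_den_mono[OF x, of m] by (auto simp: q_def q'_def)
  show det: "q * p' - p * q' = (-1) ^ m" using conv_det[of x m] by (simp add: q_def q'_def p_def p'_def)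
  define r where "r = cf_rem x (Suc m)"
  define D where "D = of_int q * r + of_int q'"
  have r: "r > 1" unfolding r_def using cf_rem_gt_1[OF x] .
  have "of_int q * 1 \<le> of_int q * r" "0 \<le> (of_int q' :: real)" using q r by (auto intro: mult_left_mono)
  then have qD: "of_int q \<le> D" "of_int q * r \<le> D" unfolding D_def by linarith+
  have moeb: "x * D = of_int p * r + of_int p'"
    using cf_rem_moebius[OF x, of m] by (simp add: q_def q'_def p_def p'_def r_def D_def)
  have "(of_int q * x - of_int p) * D = of_int q * (x * D) - of_int p * D"
    by (simp add: algebra_simps)
  also have "\<dots> = of_int (q * p' - p * q')"
    unfolding moeb by (simp add: D_def algebra_simps)
  finally have "(of_int q * x - of_int p) * D = (-1) ^ m" using det by simp
  moreover have D: "D > 0" using qD q by linarith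
  ultimately have "\<bar>of_int q * x - of_int p\<bar> * D = 1"
    by (metis abs_mult abs_of_pos power_abs abs_neg_one power_one)
  then have err: "\<bar>of_int q * x - of_int p\<bar> = 1 / D"
    using D by (simp add: field_simps)
  have err': "of_int q' * x - of_int p' = - r * (of_int q * x - of_int p)"
    using moeb by (simp add: D_def algebra_simps)
  show "\<bar>of_int q * x - of_int p\<bar> \<le> 1 / of_int q"
    unfolding err using qD q by (simp add: frac_le)
  have "\<bar>of_int q' * x - of_int p'\<bar> = r / D"
    unfolding err' abs_mult abs_minus_cancel err using r by simp
  also have "\<dots> \<le> r / (of_int q * r)"
    using qD q r by (intro divide_left_mono) auto
  finally show "\<bar>of_int q' * x - of_int p'\<bar> \<le> 1 / of_int q" using r by simp
qed


definition int_coeffs :: "real poly \<Rightarrow> bool" where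
  "int_coeffs R \<longleftrightarrow> (\<forall>i. coeff R i \<in> \<int>)"

lemma int_coeffs_add: "int_coeffs A \<Longrightarrow> int_coeffs B \<Longrightarrow> int_coeffs (A + B)"
  by (auto simp: int_coeffs_def)

lemma int_coeffs_smult: "c \<in> \<int> \<Longrightarrow> int_coeffs A \<Longrightarrow> int_coeffs (smult c A)"
  by (auto simp: int_coeffs_def)

lemma int_coeffs_mult: "int_coeffs A \<Longrightarrow> int_coeffs B \<Longrightarrow> int_coeffs (A * B)"
  by (auto simp: int_coeffs_def coeff_mult intro!: Ints_sum Ints_mult)

lemma int_coeffs_power: "int_coeffs A \<Longrightarrow> int_coeffs (A ^ k)"
proof (induction k)
  case 0
  show ?case by (auto simp: int_coeffs_def coeff_1)
qed (simp add: int_coeffs_mult)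

lemma int_coeffs_sum: "(\<And>i. i \<in> I \<Longrightarrow> int_coeffs (f i)) \<Longrightarrow> int_coeffs (\<Sum>i\<in>I. f i)"
  by (induction I rule: infinite_finite_induct) (auto intro: int_coeffs_add simp: int_coeffs_def)

lemma int_coeffs_pCons: "a \<in> \<int> \<Longrightarrow> int_coeffs B \<Longrightarrow> int_coeffs (pCons a B)"
  by (auto simp: int_coeffs_def coeff_pCons split: nat.splits)

lemma int_coeffs_linear: "a \<in> \<int> \<Longrightarrow> b \<in> \<int> \<Longrightarrow> int_coeffs [:a, b:]"
  by (intro int_coeffs_pCons) (auto simp: int_coeffs_def)

lemma int_coeffs_monom: "c \<in> \<int> \<Longrightarrow> int_coeffs (monom c k)"
  by (auto simp: int_coeffs_def coeff_monom)

definition int_poly_of :: "real poly \<Rightarrow> int poly" where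
  "int_poly_of R = map_poly floor R"

lemma of_int_poly_of:
  assumes "int_coeffs R"
  shows "map_poly of_int (int_poly_of R) = R"
proof (rule poly_eqI)
  fix i
  have "of_int \<lfloor>coeff R i\<rfloor> = coeff R i"
    using assms unfolding int_coeffs_def by (metis Ints_cases floor_of_int)
  then show "coeff (map_poly of_int (int_poly_of R)) i = coeff R i"
    by (simp add: int_poly_of_def coeff_map_poly)
qed

lemma degree_int_poly_of: "int_coeffs R \<Longrightarrow> degree (int_poly_of R) = degree R"
  by (metis of_int_poly_of degree_map_poly of_int_eq_0_iff)

lemma coeff_int_poly_of: "int_coeffs R \<Longrightarrow> of_int (coeff (int_poly_of R) i) = coeff R i"
  by (metis of_int_poly_of coeff_map_poly of_int_0)


section \<open>A unimodular basis of the polynomials of degree at most n\<close>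

lemma poly_eq_sum_upto: "degree p \<le> n \<Longrightarrow> poly p x = (\<Sum>i\<le>n. coeff p i * x ^ i)"
  for p :: "real poly"
  by (subst poly_as_sum_of_monoms'[symmetric]) (auto simp: poly_sum poly_monom)

lemma poly_eq_except_point:
  fixes A B :: "real poly"
  assumes "\<And>x. x \<noteq> a \<Longrightarrow> poly A x = poly B x"
  shows "A = B"
proof (rule ccontr)
  assume "A \<noteq> B"
  then have "finite {x. poly (A - B) x = 0}" by (intro poly_roots_finite) simp
  moreover have "UNIV - {a} \<subseteq> {x. poly (A - B) x = 0}" using assms by auto
  ultimately have "finite (UNIV :: real set)" by (metis finite_Diff2 finite.emptyI finite_insert finite_subset)
  then show False by (simp add: infinite_UNIV_char_0)
qed

lemma smult_sum_right: "smult c (\<Sum>i\<in>I. f i) = (\<Sum>i\<in>I. smult c (f i))"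
  by (induction I rule: infinite_finite_induct) (auto simp: smult_add_right)

lemma power_split_div:
  fixes D a b :: real
  assumes "D \<noteq> 0" "i \<le> n"
  shows "D ^ n * (a / D) ^ i * (b / D) ^ (n - i) = a ^ i * b ^ (n - i)"
proof -
  have "D ^ n = D ^ i * D ^ (n - i)" using assms(2) by (simp add: power_add[symmetric])
  then show ?thesis using assms(1) by (simp add: power_divide field_simps)
qed

lemma power_split_neg_div:
  fixes a b :: real
  assumes b: "b \<noteq> 0" and i: "i \<le> n"
  shows "(-1) ^ (n - i) * a ^ i * b ^ (n - i) = (- b) ^ n * (- a / b) ^ i"
proof -
  have "(- b) ^ n * (- a / b) ^ i = (- b) ^ (n - i) * ((- b) ^ i * (- a / b) ^ i)"
    using i by (simp add: power_add[symmetric] mult_ac)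
  also have "(- b) ^ i * (- a / b) ^ i = a ^ i"
    using b by (simp add: power_mult_distrib[symmetric])
  finally show ?thesis by (simp add: power_minus[of b] mult_ac)
qed

text \<open>Coordinates with respect to this basis are computed by
  the homogenized substitution H(R)(w) = (u + u'w)^n R((v + v'w)/(u + u'w)), which maps B_i to
  \<plusminus>T^i; since H has integer coefficients, the coordinates of an integer polynomial are
  integers.\<close>
locale unimodular_basis =
  fixes v u v' u' eps :: int and n :: nat
  assumes det: "u * v' - v * u' = eps" and eps: "eps = 1 \<or> eps = -1" and u_nonzero: "u \<noteq> 0"
begin

definition basis_poly :: "nat \<Rightarrow> real poly" where
  "basis_poly i = [:- of_int v, of_int u:] ^ i * [:- of_int v', of_int u':] ^ (n - i)"

definition subst_monom :: "nat \<Rightarrow> real poly" where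
  "subst_monom l = [:of_int v, of_int v':] ^ l * [:of_int u, of_int u':] ^ (n - l)"

definition homog_subst :: "real poly \<Rightarrow> real poly" where
  "homog_subst R = (\<Sum>l\<le>n. smult (coeff R l) (subst_monom l))"

definition sign :: "nat \<Rightarrow> real" where
  "sign i = of_int eps ^ n * (-1) ^ (n - i)"

definition coord :: "real poly \<Rightarrow> nat \<Rightarrow> real" where
  "coord R i = sign i * coeff (homog_subst R) i"

definition combination :: "(nat \<Rightarrow> real) \<Rightarrow> real poly" where
  "combination E = (\<Sum>i\<le>n. smult (E i) (basis_poly i))"

lemma det_real: "of_int u * of_int v' - of_int v * of_int u' = (of_int eps :: real)"
  using det by (metis of_int_diff of_int_mult)

lemma eps_square: "(of_int eps :: real) * of_int eps = 1"
  using eps by auto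

lemma sign_square: "sign i * sign i = 1"
proof -
  have "sign i * sign i = (of_int eps * of_int eps) ^ n * ((-1) * (-1)) ^ (n - i)"
    by (simp add: sign_def power_mult_distrib mult_ac)
  then show ?thesis by (simp add: eps_square)
qed

lemma abs_sign: "\<bar>sign i\<bar> = 1"
  using eps by (auto simp: sign_def abs_mult power_abs)

lemma sign_int: "sign i \<in> \<int>"
  by (simp add: sign_def)

lemma poly_basis_poly:
  "poly (basis_poly i) x = (of_int u * x - of_int v) ^ i * (of_int u' * x - of_int v') ^ (n - i)"
  by (simp add: basis_poly_def algebra_simps)

lemma degree_product_of_linear:
  fixes a b c d :: real
  assumes "l \<le> n"
  shows "degree ([:a, b:] ^ l * [:c, d:] ^ (n - l)) \<le> n"
proof -
  have "degree ([:a, b:] ^ l * [:c, d:] ^ (n - l)) \<le> degree [:a, b:] * l + degree [:c, d:] * (n - l)"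
    by (intro order.trans[OF degree_mult_le] add_mono degree_power_le)
  also have "\<dots> \<le> 1 * l + 1 * (n - l)"
    by (intro add_mono mult_le_mono1) (auto simp: degree_pCons_le)
  finally show ?thesis using assms by simp
qed

lemma degree_basis_poly: "i \<le> n \<Longrightarrow> degree (basis_poly i) \<le> n"
  unfolding basis_poly_def by (rule degree_product_of_linear)

lemma int_coeffs_basis_poly: "int_coeffs (basis_poly i)"
  unfolding basis_poly_def by (intro int_coeffs_mult int_coeffs_power int_coeffs_linear) auto

lemma int_coeffs_subst_monom: "int_coeffs (subst_monom l)"
  unfolding subst_monom_def by (intro int_coeffs_mult int_coeffs_power int_coeffs_linear) auto

lemma degree_homog_subst: "degree (homog_subst R) \<le> n"
  unfolding homog_subst_def subst_monom_def
  by (intro degree_sum_le order.trans[OF degree_smult_le] degree_product_of_linear) auto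

lemma homog_subst_add: "homog_subst (A + C) = homog_subst A + homog_subst C"
  by (simp add: homog_subst_def smult_add_left sum.distrib)

lemma homog_subst_smult: "homog_subst (smult c A) = smult c (homog_subst A)"
  by (simp add: homog_subst_def smult_sum_right)

lemma homog_subst_0: "homog_subst 0 = 0"
  by (simp add: homog_subst_def)

lemma homog_subst_sum: "homog_subst (\<Sum>i\<in>I. f i) = (\<Sum>i\<in>I. homog_subst (f i))"
  by (induction I rule: infinite_finite_induct) (auto simp: homog_subst_add homog_subst_0)

lemma poly_homog_subst:
  assumes R: "degree R \<le> n" and D: "of_int u + of_int u' * w \<noteq> (0::real)"
  shows "poly (homog_subst R) w =
    (of_int u + of_int u' * w) ^ n * poly R ((of_int v + of_int v' * w) / (of_int u + of_int u' * w))"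
proof -
  define D where "D = (of_int u + of_int u' * w :: real)"
  define X where "X = (of_int v + of_int v' * w) / D"
  have VD: "of_int v + of_int v' * w = X * D" using D by (simp add: X_def D_def)
  have "poly (subst_monom l) w = (of_int v + of_int v' * w) ^ l * D ^ (n - l)" for l
    by (simp add: subst_monom_def D_def algebra_simps)
  then have "poly (homog_subst R) w = (\<Sum>l\<le>n. coeff R l * ((X * D) ^ l * D ^ (n - l)))"
    by (simp add: homog_subst_def poly_sum VD)
  also have "\<dots> = (\<Sum>l\<le>n. D ^ n * (coeff R l * X ^ l))"
  proof (rule sum.cong[OF refl])
    fix l assume "l \<in> {..n}"
    then have "D ^ n = D ^ l * D ^ (n - l)" by (simp add: power_add[symmetric])
    then show "coeff R l * ((X * D) ^ l * D ^ (n - l)) = D ^ n * (coeff R l * X ^ l)"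
      by (simp add: power_mult_distrib algebra_simps)
  qed
  also have "\<dots> = D ^ n * poly R X"
    by (simp add: poly_eq_sum_upto[OF R] sum_distrib_left)
  finally show ?thesis by (simp add: D_def X_def)
qed

lemma homog_subst_basis_poly:
  assumes i: "i \<le> n"
  shows "homog_subst (basis_poly i) = monom (sign i) i"
proof (rule poly_eq_except_point[where a = "- of_int u / of_int u'"])
  fix w :: real
  assume w: "w \<noteq> - of_int u / of_int u'"
  define D where "D = (of_int u + of_int u' * w :: real)"
  have D0: "D \<noteq> 0"
    using u_nonzero w by (cases "u' = 0") (auto simp: D_def field_simps)
  define X where "X = (of_int v + of_int v' * w) / D"
  have "of_int u * X - of_int v = (of_int u * of_int v' - of_int v * of_int u') * w / D"
    using D0 by (simp add: X_def D_def field_simps)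
  then have L1: "of_int u * X - of_int v = of_int eps * w / D" by (simp only: det_real)
  have "of_int u' * X - of_int v' = - (of_int u * of_int v' - of_int v * of_int u') / D"
    using D0 by (simp add: X_def D_def field_simps)
  then have L2: "of_int u' * X - of_int v' = - of_int eps / D" by (simp only: det_real)
  have "poly (homog_subst (basis_poly i)) w = D ^ n * poly (basis_poly i) X"
    using poly_homog_subst[OF degree_basis_poly[OF i], of w] D0 by (simp add: D_def X_def)
  also have "\<dots> = (of_int eps * w) ^ i * (- of_int eps) ^ (n - i)"
    unfolding poly_basis_poly L1 L2
    using power_split_div[OF D0 i, of "of_int eps * w" "- of_int eps"] by (simp add: mult.assoc)
  also have "\<dots> = sign i * w ^ i"
    using i by (simp add: sign_def power_minus[of "of_int eps"] power_mult_distrib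
        power_add[symmetric] mult_ac)
  finally show "poly (homog_subst (basis_poly i)) w = poly (monom (sign i) i) w"
    by (simp add: poly_monom)
qed

lemma inverse_substitution:
  fixes x w :: real
  assumes w: "w * (of_int u' * x - of_int v') = - (of_int u * x - of_int v)"
  shows "(of_int u + of_int u' * w) * (of_int u' * x - of_int v') = - of_int eps"
    and "(of_int v + of_int v' * w) * (of_int u' * x - of_int v') = - of_int eps * x"
proof -
  have "(of_int u + of_int u' * w) * (of_int u' * x - of_int v')
      = of_int u * (of_int u' * x - of_int v') + of_int u' * (w * (of_int u' * x - of_int v'))"
    by (simp add: algebra_simps)
  also have "\<dots> = - (of_int u * of_int v' - of_int v * of_int u')"
    unfolding w by (simp add: algebra_simps)
  finally show "(of_int u + of_int u' * w) * (of_int u' * x - of_int v') = - of_int eps"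
    by (simp only: det_real)
  have "(of_int v + of_int v' * w) * (of_int u' * x - of_int v')
      = of_int v * (of_int u' * x - of_int v') + of_int v' * (w * (of_int u' * x - of_int v'))"
    by (simp add: algebra_simps)
  also have "\<dots> = - (of_int u * of_int v' - of_int v * of_int u') * x"
    unfolding w by (simp add: algebra_simps)
  finally show "(of_int v + of_int v' * w) * (of_int u' * x - of_int v') = - of_int eps * x"
    by (simp only: det_real)
qed

lemma combination_coord:
  assumes R: "degree R \<le> n"
  shows "combination (coord R) = R"
proof (rule poly_eq_except_point[where a = "of_int v' / of_int u'"])
  fix x :: real
  assume x: "x \<noteq> of_int v' / of_int u'"
  define L1x where "L1x = of_int u * x - (of_int v :: real)"
  define L2x where "L2x = of_int u' * x - (of_int v' :: real)"
  have L2x: "L2x \<noteq> 0"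
    using x det eps by (cases "u' = 0") (auto simp: L2x_def field_simps)
  define w where "w = - L1x / L2x"
  define D where "D = of_int u + of_int u' * w"
  have "w * L2x = - L1x" using L2x by (simp add: w_def)
  then have DL: "D * L2x = - of_int eps" and VL: "(of_int v + of_int v' * w) * L2x = - of_int eps * x"
    using inverse_substitution[of w x] by (simp_all add: D_def L1x_def L2x_def)
  have "(of_int v + of_int v' * w) * L2x = (x * D) * L2x"
    using DL VL by (simp add: mult.assoc)
  then have VD: "of_int v + of_int v' * w = x * D"
    using L2x by simp
  have D0: "D \<noteq> 0" using DL eps by auto
  have HR: "poly (homog_subst R) w = D ^ n * poly R x"
    using poly_homog_subst[OF R, of w] D0 VD by (simp add: D_def)
  have "poly (combination (coord R)) x
      = (\<Sum>i\<le>n. coeff (homog_subst R) i * (sign i * L1x ^ i * L2x ^ (n - i)))"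
    by (simp add: combination_def coord_def poly_sum poly_basis_poly L1x_def L2x_def mult_ac)
  also have "\<dots> = (\<Sum>i\<le>n. of_int eps ^ n * (- L2x) ^ n * (coeff (homog_subst R) i * w ^ i))"
  proof (rule sum.cong[OF refl])
    fix i assume "i \<in> {..n}"
    then have "(-1) ^ (n - i) * L1x ^ i * L2x ^ (n - i) = (- L2x) ^ n * w ^ i"
      unfolding w_def by (intro power_split_neg_div[OF L2x]) simp
    then have "sign i * L1x ^ i * L2x ^ (n - i) = of_int eps ^ n * ((- L2x) ^ n * w ^ i)"
      unfolding sign_def by (metis mult.assoc)
    then show "coeff (homog_subst R) i * (sign i * L1x ^ i * L2x ^ (n - i))
        = of_int eps ^ n * (- L2x) ^ n * (coeff (homog_subst R) i * w ^ i)"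
      by (simp only: mult_ac)
  qed
  also have "\<dots> = of_int eps ^ n * (- L2x) ^ n * poly (homog_subst R) w"
    by (simp add: poly_eq_sum_upto[OF degree_homog_subst] sum_distrib_left)
  also have "\<dots> = of_int eps ^ n * (- L2x * D) ^ n * poly R x"
    by (simp add: HR power_mult_distrib[symmetric] mult_ac)
  also have "\<dots> = poly R x"
    using DL by (simp add: mult.commute power_mult_distrib[symmetric] eps_square)
  finally show "poly (combination (coord R)) x = poly R x" .
qed

lemma coord_combination:
  assumes i: "i \<le> n"
  shows "coord (combination E) i = E i"
proof -
  have "coeff (homog_subst (combination E)) i = (\<Sum>j\<le>n. E j * coeff (monom (sign j) j) i)"
    by (simp add: combination_def homog_subst_sum homog_subst_smult homog_subst_basis_poly coeff_sum)
  also have "\<dots> = (\<Sum>j\<le>n. if j = i then E j * sign j else 0)"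
    by (rule sum.cong) (auto simp: coeff_monom)
  also have "\<dots> = E i * sign i"
    using i by simp
  finally show ?thesis
    by (simp add: coord_def mult.left_commute sign_square)
qed

lemma combination_add: "combination E + combination E' = combination (\<lambda>i. E i + E' i)"
  by (simp add: combination_def sum.distrib smult_add_left)

lemma combination_diff: "combination E - combination E' = combination (\<lambda>i. E i - E' i)"
  by (simp add: combination_def sum_subtractf smult_diff_left)

lemma combination_smult: "smult c (combination E) = combination (\<lambda>i. c * E i)"
  by (simp add: combination_def smult_sum_right)

lemma degree_combination: "degree (combination E) \<le> n"
  unfolding combination_def
  by (intro degree_sum_le order.trans[OF degree_smult_le] degree_basis_poly) auto

lemma coeff_combination_high: "n < i \<Longrightarrow> coeff (combination E) i = 0"
  using degree_combination[of E] by (intro coeff_eq_0) simp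

lemma int_coeffs_combination: "(\<And>i. i \<le> n \<Longrightarrow> E i \<in> \<int>) \<Longrightarrow> int_coeffs (combination E)"
  unfolding combination_def by (intro int_coeffs_sum int_coeffs_smult int_coeffs_basis_poly) auto

lemma int_coeffs_combination_of_int: "int_coeffs (combination (\<lambda>i. of_int (E i)))"
  by (rule int_coeffs_combination) auto

text \<open>Since H has integer coefficients, the coordinates of an integer polynomial are integers,
  and any common divisor of its coefficients divides all its coordinates.\<close>
lemma coord_int: "int_coeffs R \<Longrightarrow> coord R i \<in> \<int>"
  unfolding coord_def homog_subst_def
  using int_coeffs_subst_monom
  by (auto simp: int_coeffs_def coeff_sum intro!: Ints_mult Ints_sum sign_int)

lemma content_dvd_coord:
  assumes "\<And>l. c dvd coeff (int_poly_of (combination (\<lambda>i. of_int (E i)))) l" and i: "i \<le> n"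
  shows "c dvd E i"
proof -
  define R where "R = combination (\<lambda>i. of_int (E i))"
  have "\<exists>z. coeff R l = of_int c * of_int z" for l
  proof -
    obtain z where "coeff (int_poly_of R) l = c * z"
      using assms(1)[of l] by (auto simp: R_def elim!: dvdE)
    then show ?thesis
      using coeff_int_poly_of[OF int_coeffs_combination_of_int, of E l] by (metis R_def of_int_mult)
  qed
  then obtain z where z: "\<And>l. coeff R l = of_int c * of_int (z l)" by metis
  have "coord R i = of_int c * (sign i * (\<Sum>l\<le>n. of_int (z l) * coeff (subst_monom l) i))"
    by (simp add: coord_def homog_subst_def coeff_sum z sum_distrib_left mult_ac)
  moreover have "sign i * (\<Sum>l\<le>n. of_int (z l) * coeff (subst_monom l) i) \<in> \<int>"
    using int_coeffs_subst_monom sign_int by (auto simp: int_coeffs_def intro!: Ints_sum Ints_mult)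
  ultimately obtain y where "of_int (E i) = (of_int (c * y) :: real)"
    using coord_combination[OF i] by (auto simp: R_def elim!: Ints_cases)
  then show ?thesis by (simp only: of_int_eq_iff) simp
qed

end


section \<open>Irreducibility criteria for integer polynomials\<close>

lemma irreducible_int_polyI:
  fixes P :: "int poly"
  assumes deg: "degree P \<ge> 1"
    and prim: "\<And>c. (\<And>i. c dvd coeff P i) \<Longrightarrow> is_unit c"
    and nofact: "\<And>A B. P = A * B \<Longrightarrow> degree A = 0 \<or> degree B = 0"
  shows "irreducible P"
proof (rule irreducibleI)
  show "P \<noteq> 0" using deg by auto
  show "\<not> is_unit P" using deg by (auto simp: is_unit_poly_iff)
  have const_unit: "is_unit A" if "P = A * B" "degree A = 0" for A B
  proof -
    have A: "A = [:coeff A 0:]" using \<open>degree A = 0\<close> by (rule degree_0_id[symmetric])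
    have "coeff A 0 dvd coeff P i" for i
      using that(1) by (subst that(1), subst A) simp
    then show ?thesis using A prim by (metis is_unit_const_poly_iff)
  qed
  fix A B assume PAB: "P = A * B"
  then have "P = B * A" by (simp add: mult.commute)
  then show "is_unit A \<or> is_unit B"
    using nofact[OF PAB] const_unit[OF PAB] const_unit[of B A] by metis
qed

lemma degree_1_no_proper_factor:
  fixes P :: "int poly"
  assumes "degree P = 1" and "P = A * B"
  shows "degree A = 0 \<or> degree B = 0"
proof -
  have "A \<noteq> 0" "B \<noteq> 0" using assms by auto
  then have "degree P = degree A + degree B" using assms(2) by (simp add: degree_mult_eq)
  then show ?thesis using assms(1) by arith
qed

lemma eisenstein_witness:
  fixes P A B :: "int poly" and p :: int
  assumes p: "prime p" and PAB: "P = A * B"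
    and A0: "p dvd coeff A 0" and B0: "\<not> p dvd coeff B 0" and lead: "\<not> p dvd lead_coeff A"
  shows "\<exists>i. 1 \<le> i \<and> i \<le> degree A \<and> \<not> p dvd coeff P i"
proof -
  define i where "i = (LEAST j. \<not> p dvd coeff A j)"
  have Ai: "\<not> p dvd coeff A i" unfolding i_def using lead by (rule LeastI)
  have i_le: "i \<le> degree A" unfolding i_def using lead by (rule Least_le)
  have below: "p dvd coeff A j" if "j < i" for j
    using not_less_Least[OF that[unfolded i_def]] by simp
  obtain i' where i': "i = Suc i'" using Ai A0 by (cases i) auto
  have "coeff P i = (\<Sum>j\<le>i'. coeff A j * coeff B (i - j)) + coeff A i * coeff B 0"
    unfolding PAB coeff_mult i' by (simp add: sum.atMost_Suc)
  moreover have "p dvd (\<Sum>j\<le>i'. coeff A j * coeff B (i - j))"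
    using below i' by (intro dvd_sum) auto
  moreover have "\<not> p dvd coeff A i * coeff B 0"
    using Ai B0 p by (simp add: prime_dvd_mult_iff)
  ultimately have "\<not> p dvd coeff P i" by (simp add: dvd_add_right_iff)
  then show ?thesis using i' i_le by auto
qed

lemma eisenstein_no_proper_factor:
  fixes P A B :: "int poly" and p :: int
  assumes p: "prime p" and N: "degree P = N"
    and lead: "\<not> p dvd coeff P N"
    and low: "\<And>i. i < N \<Longrightarrow> p dvd coeff P i"
    and const: "\<not> p ^ 2 dvd coeff P 0"
    and PAB: "P = A * B"
  shows "degree A = 0 \<or> degree B = 0"
proof (rule ccontr)
  assume "\<not> (degree A = 0 \<or> degree B = 0)"
  then have dA: "degree A \<ge> 1" and dB: "degree B \<ge> 1" by auto
  then have "A \<noteq> 0" "B \<noteq> 0" by auto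
  then have dP: "degree P = degree A + degree B" using PAB by (simp add: degree_mult_eq)
  have "coeff P N = lead_coeff P" using N by simp
  also have "\<dots> = lead_coeff A * lead_coeff B" unfolding PAB by (rule lead_coeff_mult)
  finally have lA: "\<not> p dvd lead_coeff A" and lB: "\<not> p dvd lead_coeff B" using lead by auto
  have P0: "coeff P 0 = coeff A 0 * coeff B 0" using PAB by (simp add: coeff_mult_0)
  have "0 < N" using dP dA N by simp
  then have "p dvd coeff A 0 \<or> p dvd coeff B 0" using low[of 0] P0 p by (simp add: prime_dvd_mult_iff)
  moreover have "\<not> (p dvd coeff A 0 \<and> p dvd coeff B 0)"
    using const P0 by (auto simp: power2_eq_square intro: mult_dvd_mono)
  ultimately consider "p dvd coeff A 0" "\<not> p dvd coeff B 0" | "p dvd coeff B 0" "\<not> p dvd coeff A 0"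
    by blast
  then show False
  proof cases
    case 1
    then obtain i where "1 \<le> i" "i \<le> degree A" "\<not> p dvd coeff P i"
      using eisenstein_witness[OF p PAB _ _ lA] by blast
    then show False using low dP dB N by simp
  next
    case 2
    then obtain i where "1 \<le> i" "i \<le> degree B" "\<not> p dvd coeff P i"
      using eisenstein_witness[OF p _ _ _ lB, of P A] PAB by (auto simp: mult.commute)
    then show False using low dP dA N by simp
  qed
qed


lemma no_proper_factor_mod_4:
  fixes P A B :: "int poly"
  assumes N: "degree P = N" "1 \<le> N"
    and cong: "\<And>j. \<exists>z. coeff P j = coeff (monom 1 N + [:2:]) j + 4 * z"
    and PAB: "P = A * B"
  shows "degree A = 0 \<or> degree B = 0"
proof (rule eisenstein_no_proper_factor[where p = 2, OF _ N(1) _ _ _ PAB])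
  show "prime (2::int)" by simp
  have coeff_F0: "coeff (monom 1 N + [:2:]) j = (if j = N then 1 else 0) + (if j = 0 then 2 else 0)" for j :: nat
    by (cases j) (auto simp: coeff_monom)
  obtain zN where "coeff P N = 1 + 4 * zN" using cong[of N] N(2) unfolding coeff_F0 by auto
  then show "\<not> 2 dvd coeff P N" by presburger
  show "2 dvd coeff P i" if "i < N" for i
  proof -
    obtain z where "coeff P i = coeff (monom 1 N + [:2:]) i + 4 * z" using cong by blast
    moreover have "2 dvd coeff (monom 1 N + [:2:] :: int poly) i" using that unfolding coeff_F0 by simp
    ultimately show ?thesis by simp
  qed
  obtain z0 where "coeff P 0 = 2 + 4 * z0" using cong[of 0] N(2) unfolding coeff_F0 by auto
  then show "\<not> 2 ^ 2 dvd coeff P 0" by (simp add: power2_eq_square) presburger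
qed

lemma prod_pairwise_coprime_dvd:
  fixes f :: "'a \<Rightarrow> int"
  assumes "finite I" "\<And>i. i \<in> I \<Longrightarrow> f i dvd x"
    and "\<And>i j. i \<in> I \<Longrightarrow> j \<in> I \<Longrightarrow> i \<noteq> j \<Longrightarrow> coprime (f i) (f j)"
  shows "prod f I dvd x"
  using assms
proof (induction I rule: finite_induct)
  case (insert a I)
  have "coprime (f a) (prod f I)"
    using insert by (intro prod_coprime_right) auto
  then show ?case using insert by (simp add: divides_mult)
qed simp

lemma pairwise_coprime_divisors_card:
  fixes f :: "'a \<Rightarrow> int"
  assumes "finite I" "\<And>i. i \<in> I \<Longrightarrow> f i dvd x" "\<And>i. i \<in> I \<Longrightarrow> f i \<ge> 3"
    and "\<And>i j. i \<in> I \<Longrightarrow> j \<in> I \<Longrightarrow> i \<noteq> j \<Longrightarrow> coprime (f i) (f j)" and "x > 0"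
  shows "3 ^ card I \<le> x"
proof -
  have "(3::int) ^ card I = (\<Prod>i\<in>I. 3)" by simp
  also have "\<dots> \<le> prod f I" using assms(3) by (intro prod_mono) auto
  also have "\<dots> \<le> x"
    using prod_pairwise_coprime_dvd[OF assms(1,2,4)] assms(5) by (rule zdvd_imp_le)
  finally show ?thesis .
qed

lemma binomial_le_pow2_pred: "n \<ge> 1 \<Longrightarrow> n choose k \<le> 2 ^ (n - 1)"
proof -
  assume "n \<ge> 1"
  then obtain m where n: "n = Suc m" by (cases n) auto
  show ?thesis
  proof (cases k)
    case (Suc j)
    have "(m choose j) + (m choose Suc j) \<le> (\<Sum>i\<le>m. m choose i)"
    proof (cases "j < m")
      case True
      then have "(\<Sum>i\<in>{j, Suc j}. m choose i) \<le> (\<Sum>i\<le>m. m choose i)"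
        by (intro sum_mono2) auto
      then show ?thesis by simp
    next
      case False
      then have "m choose Suc j = 0" by simp
      moreover have "m choose j \<le> (\<Sum>i\<le>m. m choose i)"
        using binomial_le_pow2[of m j] by (simp add: choose_row_sum)
      ultimately show ?thesis by (simp del: binomial_eq_0_iff)
    qed
    then show ?thesis using n Suc by (simp add: choose_row_sum)
  qed simp
qed

text \<open>The numerical inequality that makes the counting argument of the construction work.\<close>
lemma three_power_two_power_bound: "n \<ge> 2 \<Longrightarrow> (n + 1) * (4 * n - 3) * 2 ^ n < (3::nat) ^ (2 ^ n)"
proof -
  assume n: "n \<ge> 2"
  show ?thesis
  proof (cases "n = 2")
    case False
    then have n3: "n \<ge> 3" using n by simp
    have exp_bound: "2 * n + 2 \<le> 2 ^ n" using n3
    proof (induction n rule: dec_induct)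
      case (step m) then show ?case by simp
    qed simp
    have "(n + 1) * (4 * n - 3) * 2 ^ n \<le> 2 ^ n * (4 * 2 ^ n) * 2 ^ n"
      using less_exp[of n] by (intro mult_mono) (auto simp: Suc_le_eq intro: le_trans[OF diff_le_self])
    also have "\<dots> = 4 * 8 ^ n" by (simp add: power_mult_distrib[symmetric])
    also have "\<dots> < 9 * 9 ^ n"
      using power_mono[of "8::nat" 9 n] zero_less_power[of "9::nat" n] by linarith
    also have "\<dots> = 3 ^ (2 * n + 2)"
      by (simp add: power_add power_mult)
    also have "\<dots> \<le> 3 ^ (2 ^ n)"
      using exp_bound by (intro power_increasing) auto
    finally show ?thesis .
  qed simp
qed


section \<open>Integer polynomials with prescribed Taylor coefficients\<close>

text \<open>The basis polynomials B_i then satisfy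
  |B_i^[k](\<xi>)| \<le> binom(n,k) u^(2k-n), so that every integer combination with coefficients
  of size at most 4 has k-th Taylor coefficient at most c5 u^(2k-n) at \<xi>.\<close>
locale convergent_pair = unimodular_basis +
  fixes \<xi> :: real
  assumes u_pos: "1 \<le> u" and u'_nonneg: "0 \<le> u'" and u'_le: "u' \<le> u"
    and approx: "\<bar>of_int u * \<xi> - of_int v\<bar> \<le> 1 / of_int u"
    and approx': "\<bar>of_int u' * \<xi> - of_int v'\<bar> \<le> 1 / of_int u"
    and n_pos: "1 \<le> n"
begin

definition c5 :: real where "c5 = real (n + 1) * 2 ^ (n + 1)"

definition scale :: "nat \<Rightarrow> real" where "scale k = of_int u powi (2 * int k - int n)"

lemma c5_pos: "c5 > 0" by (simp add: c5_def)

lemma scale_eq: "k \<le> n \<Longrightarrow> scale k = of_int u ^ k * (1 / of_int u) ^ (n - k)"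
proof -
  assume k: "k \<le> n"
  then have "2 * int k - int n = int k - int (n - k)" by simp
  then have "scale k = of_int u powi (int k - int (n - k))" by (simp add: scale_def)
  also have "\<dots> = of_int u ^ k / of_int u ^ (n - k)"
    using u_pos by (subst power_int_diff) auto
  finally show ?thesis by (simp add: power_one_over)
qed

lemma scale_pos: "k \<le> n \<Longrightarrow> scale k > 0"
  using u_pos by (simp add: scale_eq)

lemma basis_poly_binomial_bounded:
  assumes i: "i \<le> n"
  shows "binomial_bounded (basis_poly i) \<xi> n (1 / of_int u) (of_int u)"
proof -
  have nonneg: "0 \<le> 1 / (of_int u :: real)" "0 \<le> (of_int u :: real)" using u_pos by auto
  have "binomial_bounded (1 * [:- of_int v, of_int u:] ^ i) \<xi> (0 + i) (1 / of_int u) (of_int u)"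
    using approx u_pos nonneg
    by (intro binomial_bounded_mult_linear_power binomial_bounded_1) auto
  then have "binomial_bounded ([:- of_int v, of_int u:] ^ i * [:- of_int v', of_int u':] ^ (n - i))
      \<xi> (i + (n - i)) (1 / of_int u) (of_int u)"
    using approx' u'_nonneg u'_le nonneg
    by (intro binomial_bounded_mult_linear_power) auto
  then show ?thesis using i by (simp add: basis_poly_def)
qed

lemma taylor_coeff_small_combination:
  assumes d: "\<And>i. i \<le> n \<Longrightarrow> \<bar>d i\<bar> \<le> 4" and k: "k \<le> n"
  shows "\<bar>taylor_coeff (combination d) k \<xi>\<bar> \<le> c5 * scale k"
proof -
  have B: "\<bar>taylor_coeff (basis_poly i) k \<xi>\<bar> \<le> real (n choose k) * scale k" if "i \<le> n" for i
    using basis_poly_binomial_bounded[OF that] k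
    by (simp add: binomial_bounded_def scale_eq mult.assoc)
  have "\<bar>taylor_coeff (combination d) k \<xi>\<bar> \<le> (\<Sum>i\<le>n. \<bar>d i * taylor_coeff (basis_poly i) k \<xi>\<bar>)"
    unfolding combination_def taylor_coeff_sum taylor_coeff_smult by (rule sum_abs)
  also have "\<dots> \<le> (\<Sum>i\<le>n. 4 * (real (n choose k) * scale k))"
  proof (rule sum_mono)
    fix i assume "i \<in> {..n}"
    then show "\<bar>d i * taylor_coeff (basis_poly i) k \<xi>\<bar> \<le> 4 * (real (n choose k) * scale k)"
      unfolding abs_mult using d B by (intro mult_mono) auto
  qed
  also have "\<dots> = real (n + 1) * 4 * real (n choose k) * scale k" by simp
  also have "\<dots> \<le> real (n + 1) * 4 * 2 ^ (n - 1) * scale k"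
  proof -
    have "real (n choose k) \<le> 2 ^ (n - 1)"
      using binomial_le_pow2_pred[OF n_pos, of k] by (metis of_nat_le_iff of_nat_numeral of_nat_power)
    then show ?thesis using scale_pos[OF k] by (intro mult_right_mono mult_left_mono) auto
  qed
  also have "\<dots> = c5 * scale k"
  proof -
    have "(4::real) * 2 ^ (n - 1) = 2 ^ (n + 1)"
      using n_pos by (cases n) (auto simp: power_Suc)
    then show ?thesis unfolding c5_def by (metis mult.assoc)
  qed
  finally show ?thesis .
qed

definition target :: "(nat \<Rightarrow> real) \<Rightarrow> real poly" where
  "target s = (\<Sum>k\<le>n. smult (2 * c5 * s k * scale k) ([:-\<xi>, 1:] ^ k))"

lemma taylor_coeff_target:
  assumes k: "k \<le> n"
  shows "taylor_coeff (target s) k \<xi> = 2 * c5 * s k * scale k"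
proof -
  have "taylor_coeff (target s) k \<xi> = (\<Sum>j\<le>n. if j = k then 2 * c5 * s j * scale j else 0)"
    unfolding target_def taylor_coeff_sum taylor_coeff_smult taylor_coeff_linear_power
    by (rule sum.cong) auto
  then show ?thesis using k by simp
qed

lemma degree_target: "degree (target s) \<le> n"
  unfolding target_def
  by (intro degree_sum_le order.trans[OF degree_smult_le]) (auto simp: degree_linear_power)

lemma taylor_coeff_near_target:
  assumes d: "\<And>i. i \<le> n \<Longrightarrow> \<bar>d i\<bar> \<le> 4" and s: "\<bar>s k\<bar> = 1" and k: "k \<le> n"
    and R: "taylor_coeff R k \<xi> = taylor_coeff (target s) k \<xi> + taylor_coeff (combination d) k \<xi>"
  shows "c5 * scale k \<le> \<bar>taylor_coeff R k \<xi>\<bar> \<and> \<bar>taylor_coeff R k \<xi>\<bar> \<le> 3 * c5 * scale k"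
proof -
  have "\<bar>taylor_coeff (target s) k \<xi>\<bar> = 2 * c5 * scale k"
    using taylor_coeff_target[OF k, of s] s scale_pos[OF k] c5_pos by (simp add: abs_mult)
  moreover have "\<bar>taylor_coeff (combination d) k \<xi>\<bar> \<le> c5 * scale k"
    by (rule taylor_coeff_small_combination[OF d k])
  ultimately show ?thesis using R by (auto simp: abs_le_iff)
qed

lemma taylor_coeff_combination_split:
  assumes "degree R \<le> n"
  shows "taylor_coeff (combination E) k \<xi> =
    taylor_coeff R k \<xi> + taylor_coeff (combination (\<lambda>i. E i - coord R i)) k \<xi>"
proof -
  have "combination E = R + combination (\<lambda>i. E i - coord R i)"
    using combination_diff[of E "coord R"] combination_coord[OF assms] by (metis add_diff_cancel_left' diff_add_cancel)
  then show ?thesis by (simp add: taylor_coeff_add)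
qed

lemma combination_near_target:
  assumes E: "\<And>i. i \<le> n \<Longrightarrow> \<bar>E i - coord (target s) i\<bar> \<le> 4" and s: "\<And>k. \<bar>s k\<bar> = 1"
    and k: "k \<le> n"
  shows "c5 * scale k \<le> \<bar>taylor_coeff (combination E) k \<xi>\<bar> \<and>
    \<bar>taylor_coeff (combination E) k \<xi>\<bar> \<le> 3 * c5 * scale k"
proof (rule taylor_coeff_near_target[where s = s, OF _ s k])
  show "\<bar>E i - coord (target s) i\<bar> \<le> 4" if "i \<le> n" for i using E that .
  show "taylor_coeff (combination E) k \<xi> = taylor_coeff (target s) k \<xi>
      + taylor_coeff (combination (\<lambda>i. E i - coord (target s) i)) k \<xi>"
    by (rule taylor_coeff_combination_split[OF degree_target])
qed

lemma degree_combination_near_target: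
  assumes "\<And>i. i \<le> n \<Longrightarrow> \<bar>E i - coord (target s) i\<bar> \<le> 4" and "\<And>k. \<bar>s k\<bar> = 1"
  shows "degree (combination E) = n"
proof (rule degree_eq_if_taylor_coeff_nonzero[OF degree_combination])
  show "taylor_coeff (combination E) n \<xi> \<noteq> 0"
    using combination_near_target[OF assms order_refl] mult_pos_pos[OF c5_pos scale_pos[of n]]
    by auto
qed

end


text \<open>Rounding the coordinates of R into the residue classes modulo 4 of the coordinates of an
  integer polynomial F0, and then shifting up by 4 those with index in S.\<close>
context unimodular_basis
begin

definition round_coord :: "int poly \<Rightarrow> real poly \<Rightarrow> nat set \<Rightarrow> nat \<Rightarrow> int" where
  "round_coord F0 R S i = \<lfloor>coord (map_poly of_int F0) i\<rfloor>
     + 4 * (\<lfloor>(coord R i - coord (map_poly of_int F0) i) / 4\<rfloor> + (if i \<in> S then 1 else 0))"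

lemma coord_of_int_poly: "of_int \<lfloor>coord (map_poly of_int F0) i\<rfloor> = coord (map_poly of_int F0) i"
proof -
  have "int_coeffs (map_poly of_int F0)" by (simp add: int_coeffs_def coeff_map_poly)
  then show ?thesis by (metis coord_int Ints_cases floor_of_int)
qed

lemma round_coord_below:
  assumes "i \<notin> S"
  shows "coord R i - 4 < of_int (round_coord F0 R S i) \<and> of_int (round_coord F0 R S i) \<le> coord R i"
proof -
  let ?y = "(coord R i - coord (map_poly of_int F0) i) / 4"
  have "of_int \<lfloor>?y\<rfloor> \<le> ?y" "?y < of_int \<lfloor>?y\<rfloor> + 1" by linarith+
  then show ?thesis using assms coord_of_int_poly[of F0 i] by (auto simp: round_coord_def field_simps)
qed

lemma round_coord_close: "\<bar>of_int (round_coord F0 R S i) - coord R i\<bar> \<le> 4"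
proof -
  have "round_coord F0 R S i = round_coord F0 R {} i + 4 * (if i \<in> S then 1 else 0)"
    by (simp add: round_coord_def)
  then show ?thesis using round_coord_below[of i "{}" R F0] by (auto simp: abs_le_iff)
qed

lemma round_coord_shift:
  "round_coord F0 R S i - round_coord F0 R T i = 4 * ((if i \<in> S then 1 else 0) - (if i \<in> T then 1 else 0))"
  by (simp add: round_coord_def algebra_simps)

lemma round_coord_congruent:
  assumes F0: "degree F0 \<le> n"
  shows "\<exists>z. coeff (int_poly_of (combination (\<lambda>i. of_int (round_coord F0 R S i)))) j = coeff F0 j + 4 * z"
proof -
  define G where "G i = \<lfloor>(coord R i - coord (map_poly of_int F0) i) / 4\<rfloor> + (if i \<in> S then 1 else 0)" for i
  have "combination (\<lambda>i. of_int (round_coord F0 R S i))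
      = combination (coord (map_poly of_int F0)) + smult 4 (combination (\<lambda>i. of_int (G i)))"
    by (simp add: round_coord_def G_def coord_of_int_poly combination_add combination_smult)
  also have "combination (coord (map_poly of_int F0)) = map_poly of_int F0"
    using F0 by (intro combination_coord) (simp add: degree_map_poly)
  finally have "coeff (combination (\<lambda>i. of_int (round_coord F0 R S i))) j
      = of_int (coeff F0 j) + 4 * coeff (combination (\<lambda>i. of_int (G i))) j"
    by (simp add: coeff_map_poly)
  moreover obtain z where "coeff (combination (\<lambda>i. of_int (G i))) j = of_int z"
    using int_coeffs_combination_of_int[of G] by (auto simp: int_coeffs_def elim!: Ints_cases)
  ultimately have "of_int (coeff (int_poly_of (combination (\<lambda>i. of_int (round_coord F0 R S i)))) j)
      = (of_int (coeff F0 j + 4 * z) :: real)"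
    by (simp add: coeff_int_poly_of[OF int_coeffs_combination_of_int])
  then show ?thesis by (simp only: of_int_eq_iff) blast
qed

end


text \<open>Twisted power sums 1 + r - r^2 + r^3 + ... + r^n.  For 0 \<le> r \<le> 1 they lie in
  [1, n - 3/4]; the twist in degree 2 keeps the upper bound below n.\<close>
definition twist :: "nat \<Rightarrow> real" where "twist k = (if k = 2 then -1 else 1)"

lemma twisted_power_sum_bounds:
  fixes r :: real
  assumes r: "0 \<le> r" "r \<le> 1" and n: "2 \<le> n"
  shows "1 \<le> (\<Sum>k\<le>n. twist k * r ^ k) \<and> (\<Sum>k\<le>n. twist k * r ^ k) \<le> real n - 3/4"
  using n
proof (induction n rule: dec_induct)
  case base
  have "r - r ^ 2 \<le> 1/4"
    using zero_le_power2[of "r - 1/2"] by (simp add: power2_eq_square algebra_simps)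
  moreover have "r ^ 2 \<le> r" using r by (simp add: power2_eq_square mult_left_le)
  ultimately show ?case by (simp add: twist_def numeral_2_eq_2)
next
  case (step m)
  have "r ^ Suc m \<le> 1" "0 \<le> r ^ Suc m" using r by (simp_all only: power_le_one zero_le_power)
  then show ?case using step by (simp add: twist_def)
qed

context convergent_pair
begin

definition defect :: real where "defect = of_int u * (of_int u * \<xi> - of_int v)"

lemma abs_defect_le_1: "\<bar>defect\<bar> \<le> 1"
proof -
  have "\<bar>defect\<bar> = of_int u * \<bar>of_int u * \<xi> - of_int v\<bar>" using u_pos by (simp add: defect_def abs_mult)
  also have "\<dots> \<le> of_int u * (1 / of_int u)" using approx u_pos by (intro mult_left_mono) auto
  finally show ?thesis using u_pos by simp
qed

lemma scale_times_power:
  assumes k: "k \<le> n"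
  shows "of_int u ^ n * (scale k * (of_int v / of_int u - \<xi>) ^ k) = (- defect) ^ k"
proof -
  have u0: "(of_int u :: real) \<noteq> 0" using u_pos by simp
  have "of_int u ^ n * scale k = of_int u ^ k * of_int u ^ k"
    using k u0 by (simp add: scale_eq power_add[symmetric] power_one_over field_simps
        flip: power_diff)
  moreover have "of_int u ^ k * (of_int v / of_int u - \<xi>) ^ k = (- (of_int u * \<xi> - of_int v)) ^ k"
    using u0 by (simp add: power_mult_distrib[symmetric] field_simps)
  ultimately have "of_int u ^ n * (scale k * (of_int v / of_int u - \<xi>) ^ k)
      = of_int u ^ k * (- (of_int u * \<xi> - of_int v)) ^ k"
    by (metis mult.assoc)
  then show ?thesis
    by (simp add: defect_def power_mult_distrib[symmetric] algebra_simps)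
qed

lemma coord_target_0: "coord (target s) 0 = sign 0 * (\<Sum>k\<le>n. 2 * c5 * s k * (- defect) ^ k)"
proof -
  have u0: "(of_int u :: real) \<noteq> 0" using u_pos by simp
  have "coeff (homog_subst (target s)) 0 = poly (homog_subst (target s)) 0"
    by (simp add: poly_0_coeff_0)
  also have "\<dots> = of_int u ^ n * poly (target s) (of_int v / of_int u)"
    using poly_homog_subst[OF degree_target, of 0 s] u0 by simp
  also have "\<dots> = (\<Sum>k\<le>n. 2 * c5 * s k * (of_int u ^ n * (scale k * (of_int v / of_int u - \<xi>) ^ k)))"
    by (simp add: target_def poly_sum sum_distrib_left mult_ac)
  also have "\<dots> = (\<Sum>k\<le>n. 2 * c5 * s k * (- defect) ^ k)"
    by (rule sum.cong) (simp_all add: scale_times_power)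
  finally show ?thesis by (simp add: coord_def)
qed

text \<open>The signs used for P: with them the constant coordinate of the target is the positive
  number 2 c5 (1 + |d| - |d|^2 + |d|^3 + ... + |d|^n), where d is the defect.\<close>
definition P_sign :: "nat \<Rightarrow> real" where
  "P_sign k = sign 0 * (if defect \<le> 0 then 1 else -1) ^ k * twist k"

lemma abs_P_sign: "\<bar>P_sign k\<bar> = 1"
  by (simp add: P_sign_def abs_sign abs_mult power_abs twist_def)

lemma coord_target_P_sign_0: "coord (target P_sign) 0 = 2 * c5 * (\<Sum>k\<le>n. twist k * \<bar>defect\<bar> ^ k)"
proof -
  have "(if defect \<le> 0 then 1 else -1) * (- defect) = \<bar>defect\<bar>" by simp
  then have "P_sign k * (- defect) ^ k = sign 0 * (twist k * \<bar>defect\<bar> ^ k)" for k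
    unfolding P_sign_def by (metis (no_types, lifting) mult.assoc mult.commute power_mult_distrib)
  then have "coord (target P_sign) 0 = sign 0 * sign 0 * (2 * c5 * (\<Sum>k\<le>n. twist k * \<bar>defect\<bar> ^ k))"
    by (simp add: coord_target_0 sum_distrib_left mult_ac)
  then show ?thesis by (simp add: sign_square)
qed

end


section \<open>The polynomial P in degree n \<ge> 2\<close>

text \<open>Candidates P_S: round the coordinates of the target with signs P_sign into the residue
  classes of T^n + 2 modulo 4, shifting the coordinates with index in S \<subseteq> {1..n} by 4.
  Each candidate satisfies the Taylor bounds and, by Eisenstein's criterion at 2, has no
  proper factorization.  Their contents are odd and pairwise coprime, and all divide the
  common constant coordinate, which is too small to have 2^n pairwise coprime divisors \<ge> 3;
  hence some candidate is primitive, and thus irreducible.\<close>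
context convergent_pair
begin

definition P_base :: "int poly" where "P_base = monom 1 n + [:2:]"

definition P_coords :: "nat set \<Rightarrow> nat \<Rightarrow> int" where
  "P_coords S = round_coord P_base (target P_sign) S"

definition P_cand :: "nat set \<Rightarrow> int poly" where
  "P_cand S = int_poly_of (combination (\<lambda>i. of_int (P_coords S i)))"

lemma of_int_P_cand: "map_poly of_int (P_cand S) = combination (\<lambda>i. of_int (P_coords S i))"
  unfolding P_cand_def by (rule of_int_poly_of[OF int_coeffs_combination_of_int])

lemma P_cand_taylor_bounds:
  "k \<le> n \<Longrightarrow> c5 * scale k \<le> \<bar>taylor_coeff (map_poly of_int (P_cand S)) k \<xi>\<bar> \<and>
    \<bar>taylor_coeff (map_poly of_int (P_cand S)) k \<xi>\<bar> \<le> 3 * c5 * scale k"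
  unfolding of_int_P_cand P_coords_def
  by (rule combination_near_target[OF round_coord_close abs_P_sign])

lemma degree_P_cand: "degree (P_cand S) = n"
  unfolding P_cand_def P_coords_def
  by (simp add: degree_int_poly_of int_coeffs_combination_of_int
      degree_combination_near_target[OF round_coord_close abs_P_sign])

lemma P_cand_congruent: "\<exists>z. coeff (P_cand S) j = coeff P_base j + 4 * z"
proof -
  have "degree P_base \<le> n"
    using n_pos by (auto simp: P_base_def intro: degree_add_le degree_monom_le)
  then show ?thesis unfolding P_cand_def P_coords_def by (rule round_coord_congruent)
qed

lemma P_cand_no_proper_factor: "P_cand S = A * B \<Longrightarrow> degree A = 0 \<or> degree B = 0"
  using P_cand_congruent unfolding P_base_def by (rule no_proper_factor_mod_4[OF degree_P_cand n_pos])

lemma P_cand_lead_odd: "odd (lead_coeff (P_cand S))"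
proof -
  have "coeff P_base n = 1"
    using n_pos by (simp add: P_base_def coeff_monom coeff_pCons split: nat.split)
  moreover obtain z where "coeff (P_cand S) n = coeff P_base n + 4 * z" using P_cand_congruent by blast
  ultimately show ?thesis by (simp add: degree_P_cand)
qed

lemma content_dvd_P_coords:
  "(\<And>l. c dvd coeff (P_cand S) l) \<Longrightarrow> i \<le> n \<Longrightarrow> c dvd P_coords S i"
  by (rule content_dvd_coord) (simp add: P_cand_def)

lemma content_P_cand_odd: "(\<And>l. c dvd coeff (P_cand S) l) \<Longrightarrow> odd c"
  using P_cand_lead_odd by (metis dvd_trans)

text \<open>The contents of two different candidates are coprime, since the candidates differ by
  4 in some coordinate.\<close>
lemma contents_coprime:
  assumes S: "S \<subseteq> {1..n}" and T: "T \<subseteq> {1..n}" and "S \<noteq> T"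
    and c: "\<And>l. c dvd coeff (P_cand S) l" and d: "\<And>l. d dvd coeff (P_cand T) l"
  shows "coprime c d"
proof -
  define g where "g = gcd c d"
  obtain j where j: "(j \<in> S) \<noteq> (j \<in> T)" using \<open>S \<noteq> T\<close> by blast
  then have "j \<le> n" using S T by auto
  then have "g dvd P_coords S j" "g dvd P_coords T j"
    using c d by (auto simp: g_def intro: content_dvd_P_coords dvd_trans[OF gcd_dvd1] dvd_trans[OF gcd_dvd2])
  then have "g dvd P_coords S j - P_coords T j" by (rule dvd_diff)
  moreover have "P_coords S j - P_coords T j \<in> {4, -4}"
    using j round_coord_shift[of P_base "target P_sign" S j T] by (auto simp: P_coords_def)
  ultimately have g4: "g dvd 4" by auto
  have "odd g"
    using content_P_cand_odd[of g S] c by (auto simp: g_def intro: dvd_trans[OF gcd_dvd1])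
  moreover have "0 \<le> g" by (simp add: g_def)
  moreover have "g \<le> 4" using g4 by (rule zdvd_imp_le) simp
  ultimately have "g = 1 \<or> g = 3" by presburger
  then have "g = 1" using g4 by auto
  then show ?thesis by (simp add: g_def coprime_iff_gcd_eq_1)
qed

lemma P_coords_0: "0 \<notin> S \<Longrightarrow> P_coords S 0 = P_coords {} 0"
  by (simp add: P_coords_def round_coord_def)

lemma P_coords_0_bounds:
  assumes n2: "2 \<le> n"
  shows "0 < P_coords {} 0 \<and> P_coords {} 0 < 3 ^ (2 ^ n)"
proof -
  have x: "coord (target P_sign) 0 - 4 < of_int (P_coords {} 0)"
    "of_int (P_coords {} 0) \<le> coord (target P_sign) 0"
    using round_coord_below[of 0 "{}"] by (simp_all add: P_coords_def)
  have sum: "1 \<le> (\<Sum>k\<le>n. twist k * \<bar>defect\<bar> ^ k)" "(\<Sum>k\<le>n. twist k * \<bar>defect\<bar> ^ k) \<le> real n - 3/4"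
    using twisted_power_sum_bounds[OF _ abs_defect_le_1 n2] by auto
  have "8 \<le> c5"
  proof -
    have "(2::real) ^ 3 \<le> 2 ^ (n + 1)" using n2 by (intro power_increasing) auto
    then have "1 * 2 ^ 3 \<le> real (n + 1) * (2::real) ^ (n + 1)" by (intro mult_mono) auto
    then show ?thesis by (simp add: c5_def)
  qed
  then have "8 * 1 \<le> c5 * (\<Sum>k\<le>n. twist k * \<bar>defect\<bar> ^ k)"
    using sum by (intro mult_mono) auto
  then have "(0::real) < of_int (P_coords {} 0)"
    using x by (simp add: coord_target_P_sign_0)
  have "c5 * (\<Sum>k\<le>n. twist k * \<bar>defect\<bar> ^ k) \<le> c5 * (real n - 3/4)"
    using sum c5_pos by (intro mult_left_mono) auto
  then have "(of_int (P_coords {} 0) :: real) \<le> 2 * c5 * (real n - 3/4)"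
    using x by (simp add: coord_target_P_sign_0)
  also have "\<dots> = real ((n + 1) * (4 * n - 3) * 2 ^ n)"
  proof -
    have "real (4 * n - 3) = 4 * real n - 3" using n2 by simp
    then show ?thesis unfolding c5_def of_nat_mult of_nat_power by (simp add: algebra_simps)
  qed
  also have "\<dots> < real (3 ^ (2 ^ n))"
    using three_power_two_power_bound[OF n2] by (simp only: of_nat_less_iff)
  finally have "(of_int (P_coords {} 0) :: real) < of_int (3 ^ (2 ^ n))" by simp
  with \<open>(0::real) < of_int (P_coords {} 0)\<close> show ?thesis
    by (simp only: of_int_less_iff of_int_0_less_iff)
qed

lemma primitive_P_cand_exists:
  assumes n2: "2 \<le> n"
  shows "\<exists>S. \<forall>c. (\<forall>i. c dvd coeff (P_cand S) i) \<longrightarrow> is_unit c"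
proof (rule ccontr)
  assume "\<not> ?thesis"
  then obtain c where c: "\<And>S i. c S dvd coeff (P_cand S) i" and nonunit: "\<And>S. \<not> is_unit (c S)"
    by metis
  define f where "f S = \<bar>c S\<bar>" for S
  have f_dvd: "f S dvd coeff (P_cand S) i" for S i using c by (simp add: f_def)
  define x where "x = P_coords {} 0"
  have x: "0 < x" "x < 3 ^ (2 ^ n)" using P_coords_0_bounds[OF n2] by (auto simp: x_def)
  have "3 ^ card (Pow {1..n}) \<le> x"
  proof (rule pairwise_coprime_divisors_card[of "Pow {1..n}" f])
    show "f S dvd x" if "S \<in> Pow {1..n}" for S
    proof -
      have "0 \<notin> S" using that by auto
      then show ?thesis using content_dvd_P_coords[OF f_dvd, of 0 S] P_coords_0[of S] by (simp add: x_def)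
    qed
    show "3 \<le> f S" for S
    proof -
      have "odd (f S)" "f S \<noteq> 1" "0 \<le> f S"
        using content_P_cand_odd[OF f_dvd] nonunit[of S] by (auto simp: f_def)
      then show ?thesis by presburger
    qed
    show "coprime (f S) (f T)" if "S \<in> Pow {1..n}" "T \<in> Pow {1..n}" "S \<noteq> T" for S T
      using that by (intro contents_coprime[OF _ _ _ f_dvd f_dvd]) auto
  qed (use x in auto)
  then show False using x by (simp add: card_Pow)
qed

lemma P_exists_ge_2:
  assumes "2 \<le> n"
  shows "\<exists>P. irreducible P \<and> degree P = n \<and> (\<forall>k\<le>n.
    c5 * scale k \<le> \<bar>taylor_coeff (map_poly of_int P) k \<xi>\<bar> \<and>
    \<bar>taylor_coeff (map_poly of_int P) k \<xi>\<bar> \<le> 3 * c5 * scale k)"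
proof -
  obtain S where S: "\<And>c. (\<And>i. c dvd coeff (P_cand S) i) \<Longrightarrow> is_unit c"
    using primitive_P_cand_exists[OF assms] by blast
  have "irreducible (P_cand S)"
    using n_pos S P_cand_no_proper_factor by (intro irreducible_int_polyI) (auto simp: degree_P_cand)
  then show ?thesis using degree_P_cand P_cand_taylor_bounds by blast
qed

end


section \<open>The polynomial P in degree 1\<close>

text \<open>For n = 1 the constant coordinate of the target is 16 (1 + |d|) \<in> [16, 32].  We replace
  it by one of the primes 17, 23, 29 at distance at most 4, and the other coordinate by a
  neighbouring integer not divisible by that prime; the resulting linear polynomial is
  primitive, hence irreducible.\<close>
context convergent_pair
begin

definition P1_prime :: int where
  "P1_prime = (let t = coord (target P_sign) 0 in if t \<le> 21 then 17 else if t \<le> 27 then 23 else 29)"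

definition P1_coord1 :: int where
  "P1_coord1 = (let t = \<lfloor>coord (target P_sign) 1\<rfloor> in if P1_prime dvd t then t + 1 else t)"

definition P1_coords :: "nat \<Rightarrow> int" where
  "P1_coords i = (if i = 0 then P1_prime else P1_coord1)"

definition P1 :: "int poly" where
  "P1 = int_poly_of (combination (\<lambda>i. of_int (P1_coords i)))"

lemma prime_P1_prime: "prime P1_prime"
  by (simp add: P1_prime_def Let_def)

lemma P1_coord1_not_dvd: "\<not> P1_prime dvd P1_coord1"
proof -
  have "\<not> P1_prime dvd 1" using prime_P1_prime by (auto simp: prime_int_iff)
  then show ?thesis
    unfolding P1_coord1_def Let_def by (auto simp: dvd_add_right_iff)
qed

lemma P1_coords_close:
  assumes "n = 1" "i \<le> n"
  shows "\<bar>of_int (P1_coords i) - coord (target P_sign) i\<bar> \<le> 4"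
proof (cases "i = 0")
  case True
  have "c5 = 8" "(\<Sum>k\<le>n. twist k * \<bar>defect\<bar> ^ k) = 1 + \<bar>defect\<bar>"
    unfolding c5_def using assms(1) by (simp_all add: twist_def)
  then have "coord (target P_sign) 0 = 16 * (1 + \<bar>defect\<bar>)"
    by (simp add: coord_target_P_sign_0)
  then have "16 \<le> coord (target P_sign) 0" "coord (target P_sign) 0 \<le> 32"
    using abs_defect_le_1 by auto
  then show ?thesis using True by (auto simp: P1_coords_def P1_prime_def Let_def)
next
  case False
  then have i: "i = 1" using assms by simp
  let ?t = "coord (target P_sign) 1"
  have floor: "of_int \<lfloor>?t\<rfloor> \<le> ?t" "?t < of_int \<lfloor>?t\<rfloor> + 1" by linarith+
  have "(of_int P1_coord1 :: real) = of_int \<lfloor>?t\<rfloor> \<or> (of_int P1_coord1 :: real) = of_int \<lfloor>?t\<rfloor> + 1"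
    by (simp add: P1_coord1_def Let_def)
  then have "\<bar>of_int P1_coord1 - ?t\<bar> \<le> 4"
    unfolding abs_le_iff by (elim disjE; intro conjI; use floor in linarith)
  then show ?thesis using i by (simp add: P1_coords_def)
qed

lemma of_int_P1: "map_poly of_int P1 = combination (\<lambda>i. of_int (P1_coords i))"
  unfolding P1_def by (rule of_int_poly_of[OF int_coeffs_combination_of_int])

lemma P_exists_1:
  assumes n: "n = 1"
  shows "\<exists>P. irreducible P \<and> degree P = n \<and> (\<forall>k\<le>n.
    c5 * scale k \<le> \<bar>taylor_coeff (map_poly of_int P) k \<xi>\<bar> \<and>
    \<bar>taylor_coeff (map_poly of_int P) k \<xi>\<bar> \<le> 3 * c5 * scale k)"
proof (intro exI conjI allI impI)
  have close: "\<And>i. i \<le> n \<Longrightarrow> \<bar>of_int (P1_coords i) - coord (target P_sign) i\<bar> \<le> 4"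
    using P1_coords_close[OF n] .
  show deg: "degree P1 = n"
    unfolding P1_def
    by (simp add: degree_int_poly_of int_coeffs_combination_of_int
        degree_combination_near_target[OF close abs_P_sign])
  show "c5 * scale k \<le> \<bar>taylor_coeff (map_poly of_int P1) k \<xi>\<bar>"
    "\<bar>taylor_coeff (map_poly of_int P1) k \<xi>\<bar> \<le> 3 * c5 * scale k" if "k \<le> n" for k
    unfolding of_int_P1 using combination_near_target[OF close abs_P_sign that] by auto
  show "irreducible P1"
  proof (rule irreducible_int_polyI)
    show "1 \<le> degree P1" using deg n by simp
    show "degree A = 0 \<or> degree B = 0" if "P1 = A * B" for A B
      using degree_1_no_proper_factor[OF _ that] deg n by simp
    show "is_unit c" if c: "\<And>i. c dvd coeff P1 i" for c
    proof -
      have "c dvd P1_coords i" if "i \<le> n" for i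
        using content_dvd_coord[of c P1_coords i] c that unfolding P1_def by blast
      then have "c dvd P1_coords 0" "c dvd P1_coords 1" using n by auto
      then have "\<bar>c\<bar> dvd P1_prime" "c dvd P1_coord1" by (simp_all add: P1_coords_def)
      then have "\<bar>c\<bar> = 1 \<or> \<bar>c\<bar> = P1_prime" using prime_P1_prime by (auto simp: prime_int_iff)
      moreover have "\<bar>c\<bar> \<noteq> P1_prime"
        using \<open>c dvd P1_coord1\<close> P1_coord1_not_dvd by (metis abs_dvd_iff)
      ultimately show ?thesis by simp
    qed
  qed
qed

end


section \<open>The monic polynomial Q of degree n + 1\<close>

text \<open>Q = T^(n+1) + (an integer combination of the B_i): the combination is obtained by rounding,
  into the residue classes of the constant 2 modulo 4, the coordinates of
  target + (T - \<xi>)^(n+1) - T^(n+1), which has degree at most n.  Since (T - \<xi>)^(n+1) has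
  vanishing Taylor coefficients of order \<le> n at \<xi>, Q satisfies the same bounds as P; it is
  congruent to T^(n+1) + 2 modulo 4 and monic, hence irreducible.\<close>
context convergent_pair
begin

definition Q_shift :: "real poly" where
  "Q_shift = target (\<lambda>_. 1) + ([:-\<xi>, 1:] ^ (n + 1) - monom 1 (n + 1))"

definition Q_coords :: "nat \<Rightarrow> int" where "Q_coords = round_coord [:2:] Q_shift {}"

definition Q_real :: "real poly" where
  "Q_real = monom 1 (n + 1) + combination (\<lambda>i. of_int (Q_coords i))"

definition Q :: "int poly" where "Q = int_poly_of Q_real"

lemma degree_Q_shift: "degree Q_shift \<le> n"
proof -
  have "coeff ([:-\<xi>, 1:] ^ (n + 1) - monom 1 (n + 1)) i = 0" if "n < i" for i
  proof (cases "i = n + 1")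
    case False
    then have "coeff ([:-\<xi>, 1:] ^ (n + 1)) i = 0"
      using that by (intro coeff_eq_0) (subst degree_linear_power, linarith)
    then show ?thesis using False by (simp add: coeff_monom)
  next
    case True
    show ?thesis unfolding True coeff_diff coeff_linear_power by simp
  qed
  then have "degree ([:-\<xi>, 1:] ^ (n + 1) - monom 1 (n + 1)) \<le> n"
    by (simp add: degree_le)
  then show ?thesis unfolding Q_shift_def by (intro degree_add_le degree_target)
qed

lemma int_coeffs_Q_real: "int_coeffs Q_real"
  unfolding Q_real_def by (intro int_coeffs_add int_coeffs_monom int_coeffs_combination_of_int) auto

lemma Q_real_taylor_bounds:
  assumes k: "k \<le> n"
  shows "c5 * scale k \<le> \<bar>taylor_coeff Q_real k \<xi>\<bar> \<and> \<bar>taylor_coeff Q_real k \<xi>\<bar> \<le> 3 * c5 * scale k"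
proof (rule taylor_coeff_near_target[where s = "\<lambda>_. 1", OF _ _ k])
  show "\<bar>of_int (Q_coords i) - coord Q_shift i\<bar> \<le> 4" for i
    unfolding Q_coords_def by (rule round_coord_close)
  have lin: "taylor_coeff ([:-\<xi>, 1:] ^ (n + 1)) k \<xi> = 0"
    using k by (simp only: taylor_coeff_linear_power) simp
  have "taylor_coeff Q_real k \<xi> = taylor_coeff (monom 1 (n + 1)) k \<xi>
      + taylor_coeff (combination (\<lambda>i. of_int (Q_coords i))) k \<xi>"
    unfolding Q_real_def by (rule taylor_coeff_add)
  also have "taylor_coeff (combination (\<lambda>i. of_int (Q_coords i))) k \<xi> = taylor_coeff Q_shift k \<xi>
      + taylor_coeff (combination (\<lambda>i. of_int (Q_coords i) - coord Q_shift i)) k \<xi>"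
    by (rule taylor_coeff_combination_split[OF degree_Q_shift])
  also have "taylor_coeff Q_shift k \<xi> = taylor_coeff (target (\<lambda>_. 1)) k \<xi> - taylor_coeff (monom 1 (n + 1)) k \<xi>"
    unfolding Q_shift_def taylor_coeff_add taylor_coeff_diff lin by simp
  finally show "taylor_coeff Q_real k \<xi> = taylor_coeff (target (\<lambda>_. 1)) k \<xi>
      + taylor_coeff (combination (\<lambda>i. of_int (Q_coords i) - coord Q_shift i)) k \<xi>"
    by simp
qed simp

lemma degree_Q_real: "degree Q_real = n + 1"
  using degree_combination[of "\<lambda>i. of_int (Q_coords i)"]
  by (simp add: Q_real_def degree_add_eq_left degree_monom_eq)

lemma degree_Q: "degree Q = n + 1"
  by (simp add: Q_def degree_int_poly_of int_coeffs_Q_real degree_Q_real)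

lemma lead_coeff_Q: "lead_coeff Q = 1"
proof -
  have "coeff Q_real (n + 1) = 1"
    by (simp add: Q_real_def coeff_combination_high)
  then have "coeff Q (n + 1) = 1"
    using coeff_int_poly_of[OF int_coeffs_Q_real, of "n + 1"] by (simp add: Q_def)
  then show ?thesis by (simp only: degree_Q)
qed

lemma Q_congruent: "\<exists>z. coeff Q j = coeff (monom 1 (n + 1) + [:2:]) j + 4 * z"
proof -
  obtain z where z: "coeff (int_poly_of (combination (\<lambda>i. of_int (Q_coords i)))) j = coeff [:2:] j + 4 * z"
    using round_coord_congruent[of "[:2:]" Q_shift "{}" j] by (auto simp: Q_coords_def)
  have "(of_int (coeff Q j) :: real) = coeff Q_real j"
    unfolding Q_def by (rule coeff_int_poly_of[OF int_coeffs_Q_real])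
  also have "\<dots> = coeff (monom 1 (n + 1)) j
      + of_int (coeff (int_poly_of (combination (\<lambda>i. of_int (Q_coords i)))) j)"
    unfolding Q_real_def coeff_add coeff_int_poly_of[OF int_coeffs_combination_of_int] ..
  also have "\<dots> = of_int (coeff (monom 1 (n + 1) + [:2:]) j + 4 * z)"
    by (simp add: z coeff_monom)
  finally show ?thesis by (simp only: of_int_eq_iff) blast
qed

lemma Q_exists:
  "\<exists>Q. irreducible Q \<and> lead_coeff Q = 1 \<and> degree Q = n + 1 \<and> (\<forall>k\<le>n.
    c5 * scale k \<le> \<bar>taylor_coeff (map_poly of_int Q) k \<xi>\<bar> \<and>
    \<bar>taylor_coeff (map_poly of_int Q) k \<xi>\<bar> \<le> 3 * c5 * scale k)"
proof (intro exI conjI allI impI)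
  show "irreducible Q"
  proof (rule irreducible_int_polyI)
    show "1 \<le> degree Q" by (simp add: degree_Q)
    show "is_unit c" if "\<And>i. c dvd coeff Q i" for c
      using that[of "n + 1"] lead_coeff_Q degree_Q by simp
    show "degree A = 0 \<or> degree B = 0" if "Q = A * B" for A B
      by (rule no_proper_factor_mod_4[OF degree_Q _ Q_congruent that]) simp
  qed
  show "lead_coeff Q = 1" "degree Q = n + 1" by (rule lead_coeff_Q, rule degree_Q)
  show "c5 * scale k \<le> \<bar>taylor_coeff (map_poly of_int Q) k \<xi>\<bar>"
    "\<bar>taylor_coeff (map_poly of_int Q) k \<xi>\<bar> \<le> 3 * c5 * scale k" if "k \<le> n" for k
    using Q_real_taylor_bounds[OF that] by (simp_all add: Q_def of_int_poly_of[OF int_coeffs_Q_real])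
qed

end


lemma convergent_pair_of_convergents:
  assumes "\<xi> \<notin> \<rat>" and "1 \<le> n"
  shows "convergent_pair (conv_num \<xi> (Suc m)) (conv_den \<xi> (Suc m)) (conv_num \<xi> m) (conv_den \<xi> m)
    ((-1) ^ m) n \<xi>"
  using convergent_approximation[OF assms(1), of m] assms(2)
  by unfold_locales (auto simp: minus_one_power_iff)

theorem proposition2:
  fixes \<xi> :: real and n :: nat and q :: int and m :: nat
  assumes "\<xi> \<notin> \<rat>" and "n \<ge> 1" and "q = cf_den \<xi> m"
  shows "\<exists>P Q :: int poly.
     irreducible P \<and> degree P = n \<and>
     irreducible Q \<and> lead_coeff Q = 1 \<and> degree Q = n + 1 \<and>
     (\<forall>k\<le>n.
        (real (n+1) * 2 ^ (n+1)) * real_of_int q powi (2 * int k - int n) \<le> \<bar>div_deriv P k \<xi>\<bar> \<and>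
        \<bar>div_deriv P k \<xi>\<bar> \<le> 3 * (real (n+1) * 2 ^ (n+1)) * real_of_int q powi (2 * int k - int n) \<and>
        (real (n+1) * 2 ^ (n+1)) * real_of_int q powi (2 * int k - int n) \<le> \<bar>div_deriv Q k \<xi>\<bar> \<and>
        \<bar>div_deriv Q k \<xi>\<bar> \<le> 3 * (real (n+1) * 2 ^ (n+1)) * real_of_int q powi (2 * int k - int n))"
proof -
  interpret cp: convergent_pair "conv_num \<xi> (Suc m)" "conv_den \<xi> (Suc m)" "conv_num \<xi> m"
      "conv_den \<xi> m" "(-1) ^ m" n \<xi>
    using convergent_pair_of_convergents[OF assms(1,2)] .
  have bound: "cp.c5 * cp.scale k = (real (n+1) * 2 ^ (n+1)) * real_of_int q powi (2 * int k - int n)" for k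
    by (simp add: cp.c5_def cp.scale_def assms(3) cf_den_eq_conv_den)
  obtain P where P: "irreducible P" "degree P = n" "\<forall>k\<le>n.
      cp.c5 * cp.scale k \<le> \<bar>taylor_coeff (map_poly of_int P) k \<xi>\<bar> \<and>
      \<bar>taylor_coeff (map_poly of_int P) k \<xi>\<bar> \<le> 3 * cp.c5 * cp.scale k"
    using cp.P_exists_1 cp.P_exists_ge_2 assms(2) by (cases "n = 1") auto
  obtain Q where Q: "irreducible Q" "lead_coeff Q = 1" "degree Q = n + 1" "\<forall>k\<le>n.
      cp.c5 * cp.scale k \<le> \<bar>taylor_coeff (map_poly of_int Q) k \<xi>\<bar> \<and>
      \<bar>taylor_coeff (map_poly of_int Q) k \<xi>\<bar> \<le> 3 * cp.c5 * cp.scale k"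
    using cp.Q_exists by blast
  show ?thesis
    using P Q by (intro exI[of _ P] exI[of _ Q]) (simp add: div_deriv_taylor_coeff bound mult.assoc)
qed

end
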